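(* Let $\alpha,\beta,\gamma$ be independent random variables, and let $\hat\alpha,\hat\beta$ be random variables with the same distributions as $\alpha$ and $\beta$ respectively, such that $\alpha,\beta,\gamma,\hat\alpha,\hat\beta$ are mutually independent. Let $p(a|\beta,\gamma)$, $p(b|\alpha,\gamma)$, $p(c|\alpha,\beta)$ be arbitrary conditional distributions (response functions) with $a,b,c\in\{0,1\}$. Define $P_{obs}(a,b,c)=\mathbb E\,[p(a|\beta,\gamma)p(b|\alpha,\gamma)p(c|\alpha,\beta)]$, $P^{\beta}_{int}(a,b,c)=\mathbb E\,[p(a|\hat\beta,\gamma)p(b|\alpha,\gamma)p(c|\alpha,\beta)]$, $P^{\alpha}_{int}(a,b,c)=\mathbb E\,[p(a|\beta,\gamma)p(b|\hat\alpha,\gamma)p(c|\alpha,\beta)]$, $P^{\alpha\beta}_{int}(a,b,c)=\mathbb E\,[p(a|\hat\beta,\gamma)p(b|\hat\alpha,\gamma)p(c|\alpha,\beta)]$, the expectation being over $\alpha,\beta,\gamma,\hat\alpha,\hat\beta$. Set $E^1_{obs}=P_{obs}(a=b,c=1)-P_{obs}(a\neq b,c=1)$, $E^1_{\beta}=P^{\beta}_{int}(a=b,c=1)-P^{\beta}_{int}(a\neq b,c=1)$, $E^1_{\alpha}=P^{\alpha}_{int}(a=b,c=1)-P^{\alpha}_{int}(a\neq b,c=1)$, and $E_{\alpha\beta}=P^{\alpha\beta}_{int}(a=b)-P^{\alpha\beta}_{int}(a\neq b)$. Then $$S:=E_{\alpha\beta}\,P_{obs}(c=1)+2P_{obs}(c=1)-E^1_{obs}-E^1_{\alpha}-E^1_{\beta}\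 \ge\ 0.$$
   Context: This is the classical (local) triangle network with binary outputs: Alice's output $a$ depends on $(\beta,\gamma)$, Bob's $b$ on $(\alpha,\gamma)$, Charlie's $c$ on $(\alpha,\beta)$. The distributions $P^{\beta}_{int}$, $P^{\alpha}_{int}$, $P^{\alpha\beta}_{int}$ model "latent splitting" of the edges $\beta\to A$, $\alpha\to B$, or both: the affected party receives an independent copy of the source variable instead of the original one. Marginals such as $P(a=b,c=1)$ mean $\sum_{a=b}P(a,b,1)$. *)

theory Defs
  imports "HOL-Probability.Probability"
begin

text \<open>Joint sample space of (alpha, beta, gamma, alpha-hat, beta-hat): product of
  independent copies, alpha-hat distributed as alpha and beta-hat as beta.\<close>
definition Omega :: "'a measure \<Rightarrow> 'b measure \<Rightarrow> 'g measure \<Rightarrow> ('a \<times> 'b \<times> 'g \<times> 'a \<times> 'b) measure" where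
  "Omega A B G = A \<Otimes>\<^sub>M (B \<Otimes>\<^sub>M (G \<Otimes>\<^sub>M (A \<Otimes>\<^sub>M B)))"

text \<open>Response functions: pa a beta gamma = p(a|beta,gamma), pb b alpha gamma, pc c alpha beta.\<close>

definition Pobs :: "'a measure \<Rightarrow> 'b measure \<Rightarrow> 'g measure \<Rightarrow> (nat \<Rightarrow> 'b \<Rightarrow> 'g \<Rightarrow> real)
    \<Rightarrow> (nat \<Rightarrow> 'a \<Rightarrow> 'g \<Rightarrow> real) \<Rightarrow> (nat \<Rightarrow> 'a \<Rightarrow> 'b \<Rightarrow> real) \<Rightarrow> nat \<Rightarrow> nat \<Rightarrow> nat \<Rightarrow> real" where
  "Pobs A B G pa pb pc a b c =
     (\<integral>\<omega>. (case \<omega> of (x, y, z, x', y') \<Rightarrow> pa a y z * pb b x z * pc c x y) \<partial>Omega A B G)"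

definition Pint_beta :: "'a measure \<Rightarrow> 'b measure \<Rightarrow> 'g measure \<Rightarrow> (nat \<Rightarrow> 'b \<Rightarrow> 'g \<Rightarrow> real)
    \<Rightarrow> (nat \<Rightarrow> 'a \<Rightarrow> 'g \<Rightarrow> real) \<Rightarrow> (nat \<Rightarrow> 'a \<Rightarrow> 'b \<Rightarrow> real) \<Rightarrow> nat \<Rightarrow> nat \<Rightarrow> nat \<Rightarrow> real" where
  "Pint_beta A B G pa pb pc a b c =
     (\<integral>\<omega>. (case \<omega> of (x, y, z, x', y') \<Rightarrow> pa a y' z * pb b x z * pc c x y) \<partial>Omega A B G)"

definition Pint_alpha :: "'a measure \<Rightarrow> 'b measure \<Rightarrow> 'g measure \<Rightarrow> (nat \<Rightarrow> 'b \<Rightarrow> 'g \<Rightarrow> real)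
    \<Rightarrow> (nat \<Rightarrow> 'a \<Rightarrow> 'g \<Rightarrow> real) \<Rightarrow> (nat \<Rightarrow> 'a \<Rightarrow> 'b \<Rightarrow> real) \<Rightarrow> nat \<Rightarrow> nat \<Rightarrow> nat \<Rightarrow> real" where
  "Pint_alpha A B G pa pb pc a b c =
     (\<integral>\<omega>. (case \<omega> of (x, y, z, x', y') \<Rightarrow> pa a y z * pb b x' z * pc c x y) \<partial>Omega A B G)"

definition Pint_alphabeta :: "'a measure \<Rightarrow> 'b measure \<Rightarrow> 'g measure \<Rightarrow> (nat \<Rightarrow> 'b \<Rightarrow> 'g \<Rightarrow> real)
    \<Rightarrow> (nat \<Rightarrow> 'a \<Rightarrow> 'g \<Rightarrow> real) \<Rightarrow> (nat \<Rightarrow> 'a \<Rightarrow> 'b \<Rightarrow> real) \<Rightarrow> nat \<Rightarrow> nat \<Rightarrow> nat \<Rightarrow> real" where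
  "Pint_alphabeta A B G pa pb pc a b c =
     (\<integral>\<omega>. (case \<omega> of (x, y, z, x', y') \<Rightarrow> pa a y' z * pb b x' z * pc c x y) \<partial>Omega A B G)"

definition eq_c1 :: "(nat \<Rightarrow> nat \<Rightarrow> nat \<Rightarrow> real) \<Rightarrow> real" where
  "eq_c1 P = (\<Sum>a\<in>{0,1}. \<Sum>b\<in>{0,1}. if a = b then P a b 1 else 0)"
definition neq_c1 :: "(nat \<Rightarrow> nat \<Rightarrow> nat \<Rightarrow> real) \<Rightarrow> real" where
  "neq_c1 P = (\<Sum>a\<in>{0,1}. \<Sum>b\<in>{0,1}. if a \<noteq> b then P a b 1 else 0)"
definition c1 :: "(nat \<Rightarrow> nat \<Rightarrow> nat \<Rightarrow> real) \<Rightarrow> real" where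
  "c1 P = (\<Sum>a\<in>{0,1}. \<Sum>b\<in>{0,1}. P a b 1)"
definition eq_ab :: "(nat \<Rightarrow> nat \<Rightarrow> nat \<Rightarrow> real) \<Rightarrow> real" where
  "eq_ab P = (\<Sum>a\<in>{0,1}. \<Sum>b\<in>{0,1}. \<Sum>c\<in>{0,1}. if a = b then P a b c else 0)"
definition neq_ab :: "(nat \<Rightarrow> nat \<Rightarrow> nat \<Rightarrow> real) \<Rightarrow> real" where
  "neq_ab P = (\<Sum>a\<in>{0,1}. \<Sum>b\<in>{0,1}. \<Sum>c\<in>{0,1}. if a \<noteq> b then P a b c else 0)"

end

theory Submission
  imports Defs
begin

text \<open>
  Write \<open>bias p = p 0 - p 1\<close> for a binary response; it lies in \<open>[-1, 1]\<close>. Every correlator in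
  \<open>S\<close> is the expectation of Alice's bias times Bob's bias times Charlie's probability of \<open>c = 1\<close>.
  For \<open>E\<^sub>\<alpha>\<^sub>\<beta> P\<^sub>o\<^sub>b\<^sub>s(c = 1)\<close> this holds because the inputs \<open>\<gamma>, \<alpha>', \<beta>'\<close> of the doubly split
  parties (\<open>\<alpha>', \<beta>'\<close> being the copies) are independent of Charlie's inputs \<open>\<alpha>, \<beta>\<close>. With \<open>a, a'\<close>
  Alice's biases at \<open>\<beta>, \<beta>'\<close> and \<open>b, b'\<close> Bob's at \<open>\<alpha>, \<alpha>'\<close>, this gives
  \<open>S = E[p(1|\<alpha>,\<beta>) (2 - a b - a b' - a' b + a' b')]\<close>, and the bracket is nonnegative pointwise
  by the CHSH inequality.
\<close>

lemma chsh_inequality: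
  fixes a a' b b' :: real
  assumes "\<bar>a\<bar> \<le> 1" "\<bar>a'\<bar> \<le> 1" "\<bar>b\<bar> \<le> 1" "\<bar>b'\<bar> \<le> 1"
  shows "a * b + a * b' + a' * b - a' * b' \<le> 2"
proof -
  have le_abs: "x * y \<le> \<bar>y\<bar>" if "\<bar>x\<bar> \<le> 1" for x y :: real
    using abs_ge_self[of "x * y"] mult_left_le_one_le[of "\<bar>y\<bar>" "\<bar>x\<bar>"] that
    by (simp add: abs_mult)
  have "a * (b + b') + a' * (b - b') \<le> \<bar>b + b'\<bar> + \<bar>b - b'\<bar>"
    using le_abs assms(1,2) by (simp add: add_mono)
  also have "\<dots> \<le> 2"
    using assms(3,4) by arith
  finally show ?thesis
    by (simp add: algebra_simps)
qed

lemma integral_pair_measure_mult: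
  fixes f :: "'a \<Rightarrow> real" and g :: "'b \<Rightarrow> real"
  assumes "sigma_finite_measure M1" "sigma_finite_measure M2"
    and f: "integrable M1 f" and g: "integrable M2 g"
  shows integrable_pair_measure_mult: "integrable (M1 \<Otimes>\<^sub>M M2) (\<lambda>(x, y). f x * g y)"
    and "(\<integral>(x, y). f x * g y \<partial>(M1 \<Otimes>\<^sub>M M2)) = integral\<^sup>L M1 f * integral\<^sup>L M2 g"
proof -
  interpret pair_sigma_finite M1 M2
    using assms(1,2) by (rule pair_sigma_finite.intro)
  show int: "integrable (M1 \<Otimes>\<^sub>M M2) (\<lambda>(x, y). f x * g y)"
    by (rule Fubini_integrable) (use f g in \<open>auto simp: abs_mult\<close>)
  have "(\<integral>(x, y). f x * g y \<partial>(M1 \<Otimes>\<^sub>M M2)) = (\<integral>x. (\<integral>y. f x * g y \<partial>M2) \<partial>M1)"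
    using integral_fst'[OF int] by simp
  then show "(\<integral>(x, y). f x * g y \<partial>(M1 \<Otimes>\<^sub>M M2)) = integral\<^sup>L M1 f * integral\<^sup>L M2 g"
    by simp
qed

lemma integral_pair_pair_measure_mult:
  fixes C :: "'a \<Rightarrow> 'b \<Rightarrow> real" and F :: "'r \<Rightarrow> real"
  assumes A: "sigma_finite_measure A" and B: "sigma_finite_measure B" and R: "sigma_finite_measure R"
    and C: "integrable (A \<Otimes>\<^sub>M B) (\<lambda>(x, y). C x y)" and F: "integrable R F"
  shows "(\<integral>(x, y, r). C x y * F r \<partial>(A \<Otimes>\<^sub>M (B \<Otimes>\<^sub>M R)))
       = (\<integral>(x, y). C x y \<partial>(A \<Otimes>\<^sub>M B)) * integral\<^sup>L R F"
proof -
  interpret AB: pair_sigma_finite A B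
    using A B by (rule pair_sigma_finite.intro)
  interpret A_BR: pair_sigma_finite A "B \<Otimes>\<^sub>M R"
    using A sigma_finite_pair_measure[OF B R] by (rule pair_sigma_finite.intro)
  have slice: "AE x in A. integrable B (C x)"
    using AB.AE_integrable_fst'[OF C] by simp
  have slice_pair: "AE x in A. integrable (B \<Otimes>\<^sub>M R) (\<lambda>(y, r). C x y * F r) \<and>
      (\<integral>(y, r). C x y * F r \<partial>(B \<Otimes>\<^sub>M R)) = (\<integral>y. C x y \<partial>B) * integral\<^sup>L R F \<and>
      (\<integral>(y, r). norm (C x y * F r) \<partial>(B \<Otimes>\<^sub>M R)) = (\<integral>y. \<bar>C x y\<bar> \<partial>B) * (\<integral>r. \<bar>F r\<bar> \<partial>R)"
    using slice by eventually_elim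
      (use integral_pair_measure_mult[OF B R _ F] integral_pair_measure_mult[OF B R _ integrable_abs[OF F]]
        in \<open>auto simp: abs_mult\<close>)
  have [measurable]: "(\<lambda>(x, y). C x y) \<in> borel_measurable (A \<Otimes>\<^sub>M B)" "F \<in> borel_measurable R"
    using C F by auto
  have "integrable A (\<lambda>x. (\<integral>y. \<bar>C x y\<bar> \<partial>B) * (\<integral>r. \<bar>F r\<bar> \<partial>R))"
    using AB.integrable_fst'[OF integrable_abs[OF C]] by (simp add: split_beta')
  then have "integrable A (\<lambda>x. \<integral>p. norm ((\<lambda>(y, r). C x y * F r) p) \<partial>(B \<Otimes>\<^sub>M R))"
    by (rule integrable_cong_AE_imp) (use slice_pair in \<open>auto simp: split_beta' elim!: AE_mp\<close>)
  then have int: "integrable (A \<Otimes>\<^sub>M (B \<Otimes>\<^sub>M R)) (\<lambda>(x, y, r). C x y * F r)"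
    using slice_pair by (intro A_BR.Fubini_integrable) (auto elim!: AE_mp)
  have "(\<integral>(x, y, r). C x y * F r \<partial>(A \<Otimes>\<^sub>M (B \<Otimes>\<^sub>M R)))
      = (\<integral>x. (\<integral>(y, r). C x y * F r \<partial>(B \<Otimes>\<^sub>M R)) \<partial>A)"
    using A_BR.integral_fst'[OF int] by (simp add: split_beta')
  also have "\<dots> = (\<integral>x. (\<integral>y. C x y \<partial>B) * integral\<^sup>L R F \<partial>A)"
    using slice_pair by (intro integral_cong_AE) auto
  also have "\<dots> = (\<integral>(x, y). C x y \<partial>(A \<Otimes>\<^sub>M B)) * integral\<^sup>L R F"
    using AB.integral_fst'[OF C] by (simp add: split_beta')
  finally show ?thesis .
qed

lemma prob_integral_pair_pair_measure_mult:
  fixes C :: "'a \<Rightarrow> 'b \<Rightarrow> real" and F :: "'r \<Rightarrow> real"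
  assumes "prob_space A" "prob_space B" "prob_space R"
    and C: "integrable (A \<Otimes>\<^sub>M B) (\<lambda>(x, y). C x y)" and F: "integrable R F"
  shows "(\<integral>(x, y, r). C x y * F r \<partial>(A \<Otimes>\<^sub>M (B \<Otimes>\<^sub>M R)))
       = (\<integral>(x, y, r). C x y \<partial>(A \<Otimes>\<^sub>M (B \<Otimes>\<^sub>M R)))
         * (\<integral>(x, y, r). F r \<partial>(A \<Otimes>\<^sub>M (B \<Otimes>\<^sub>M R)))"
proof -
  note sf = assms(1-3)[THEN prob_space_imp_sigma_finite]
  interpret AB: prob_space "A \<Otimes>\<^sub>M B"
    using assms(1,2) by (rule prob_space_pair)
  interpret R: prob_space R by fact
  have "integrable (A \<Otimes>\<^sub>M B) (\<lambda>(x, y). 1 :: real)"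
    by (simp add: split_beta')
  then show ?thesis
    using integral_pair_pair_measure_mult[OF sf C F]
      integral_pair_pair_measure_mult[OF sf C R.integrable_const[of 1]]
      integral_pair_pair_measure_mult[OF sf _ F, of "\<lambda>_ _. 1"]
    by (simp add: AB.prob_space R.prob_space split_beta')
qed

definition binary_response :: "'w measure \<Rightarrow> (nat \<Rightarrow> 'w \<Rightarrow> real) \<Rightarrow> bool" where
  "binary_response M p \<longleftrightarrow>
     (\<forall>i\<in>{0, 1}. p i \<in> borel_measurable M) \<and>
     (\<forall>\<omega>\<in>space M. 0 \<le> p 0 \<omega> \<and> 0 \<le> p 1 \<omega> \<and> p 0 \<omega> + p 1 \<omega> = 1)"

definition bias :: "(nat \<Rightarrow> 'w \<Rightarrow> real) \<Rightarrow> 'w \<Rightarrow> real" where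
  "bias p \<omega> = p 0 \<omega> - p 1 \<omega>"

lemma binary_response_comp:
  assumes "binary_response N p" "X \<in> measurable M N"
    and "\<And>i \<omega>. \<omega> \<in> space M \<Longrightarrow> q i \<omega> = p i (X \<omega>)"
  shows "binary_response M q"
proof -
  have "q i \<in> borel_measurable M" if "i \<in> {0, 1}" for i
  proof -
    have "(\<lambda>\<omega>. p i (X \<omega>)) \<in> borel_measurable M"
      using assms(1,2) that by (auto simp: binary_response_def)
    then show ?thesis
      by (subst measurable_cong[where g = "\<lambda>\<omega>. p i (X \<omega>)"]) (use assms(3) in auto)
  qed
  moreover have "0 \<le> q 0 \<omega> \<and> 0 \<le> q 1 \<omega> \<and> q 0 \<omega> + q 1 \<omega> = 1" if "\<omega> \<in> space M" for \<omega>
    using assms measurable_space[OF assms(2) that] that by (simp add: binary_response_def)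
  ultimately show ?thesis
    by (simp add: binary_response_def)
qed

lemma binary_response_pair_measure:
  assumes "\<And>i. i \<in> {0, 1} \<Longrightarrow> (\<lambda>(x, y). p i x y) \<in> borel_measurable (M1 \<Otimes>\<^sub>M M2)"
    and "\<And>i x y. i \<in> {0, 1} \<Longrightarrow> x \<in> space M1 \<Longrightarrow> y \<in> space M2 \<Longrightarrow> 0 \<le> p i x y"
    and "\<And>x y. x \<in> space M1 \<Longrightarrow> y \<in> space M2 \<Longrightarrow> p 0 x y + p 1 x y = 1"
  shows "binary_response (M1 \<Otimes>\<^sub>M M2) (\<lambda>i (x, y). p i x y)"
  using assms by (auto simp: binary_response_def space_pair_measure)

lemma binary_response_bounds:
  assumes "binary_response M p" "i \<in> {0, 1}" "\<omega> \<in> space M"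
  shows "0 \<le> p i \<omega>" and "p i \<omega> \<le> 1"
  using assms by (auto simp: binary_response_def)

lemma abs_bias_le_1:
  assumes "binary_response M p" "\<omega> \<in> space M"
  shows "\<bar>bias p \<omega>\<bar> \<le> 1"
  using assms by (auto simp: binary_response_def bias_def)

lemma borel_measurable_bias:
  "binary_response M p \<Longrightarrow> bias p \<in> borel_measurable M"
  unfolding binary_response_def bias_def[abs_def] by auto

lemma (in finite_measure) integrable_abs_le:
  fixes f :: "'a \<Rightarrow> real"
  assumes "f \<in> borel_measurable M" "\<And>\<omega>. \<omega> \<in> space M \<Longrightarrow> \<bar>f \<omega>\<bar> \<le> K"
  shows "integrable M f"
  using assms by (intro integrable_const_bound[where B = K] AE_I2) auto

context finite_measure
begin

lemma integrable_response_product: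
  assumes "binary_response M f" "binary_response M g" "binary_response M h"
    and "i \<in> {0, 1}" "j \<in> {0, 1}" "k \<in> {0, 1}"
  shows "integrable M (\<lambda>\<omega>. f i \<omega> * g j \<omega> * h k \<omega>)"
proof (rule integrable_abs_le[where K = 1])
  show "(\<lambda>\<omega>. f i \<omega> * g j \<omega> * h k \<omega>) \<in> borel_measurable M"
    using assms by (intro borel_measurable_times) (auto simp: binary_response_def)
  show "\<bar>f i \<omega> * g j \<omega> * h k \<omega>\<bar> \<le> 1" if "\<omega> \<in> space M" for \<omega>
    using binary_response_bounds[OF assms(1,4) that] binary_response_bounds[OF assms(2,5) that]
      binary_response_bounds[OF assms(3,6) that]
    by (auto simp: abs_mult intro!: mult_le_one)
qed

lemma integrable_response:
  "binary_response M p \<Longrightarrow> i \<in> {0, 1} \<Longrightarrow> integrable M (p i)"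
  by (rule integrable_abs_le[where K = 1]) (auto simp: binary_response_def dest: binary_response_bounds)

lemma integrable_bias_mult:
  assumes "binary_response M p" "binary_response M q"
  shows "integrable M (\<lambda>\<omega>. bias p \<omega> * bias q \<omega>)"
  using assms abs_bias_le_1[OF assms(1)] abs_bias_le_1[OF assms(2)]
  by (intro integrable_abs_le[where K = 1] borel_measurable_times borel_measurable_bias)
    (auto simp: abs_mult intro!: mult_le_one)

lemma correlator_c1_product_form:
  assumes "binary_response M f" "binary_response M g" "binary_response M h"
  defines "P \<equiv> \<lambda>a b c. \<integral>\<omega>. f a \<omega> * g b \<omega> * h c \<omega> \<partial>M"
  shows "eq_c1 P - neq_c1 P = (\<integral>\<omega>. bias f \<omega> * bias g \<omega> * h 1 \<omega> \<partial>M)"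
proof -
  have "eq_c1 P - neq_c1 P = P 0 0 1 + P 1 1 1 - P 0 1 1 - P 1 0 1"
    by (simp add: eq_c1_def neq_c1_def)
  also have "\<dots> = (\<integral>\<omega>. f 0 \<omega> * g 0 \<omega> * h 1 \<omega> + f 1 \<omega> * g 1 \<omega> * h 1 \<omega>
      - f 0 \<omega> * g 1 \<omega> * h 1 \<omega> - f 1 \<omega> * g 0 \<omega> * h 1 \<omega> \<partial>M)"
    using integrable_response_product[OF assms(1-3)] by (simp add: P_def)
  also have "\<dots> = (\<integral>\<omega>. bias f \<omega> * bias g \<omega> * h 1 \<omega> \<partial>M)"
    by (simp add: bias_def algebra_simps)
  finally show ?thesis .
qed

lemma correlator_product_form:
  assumes "binary_response M f" "binary_response M g" "binary_response M h"
  defines "P \<equiv> \<lambda>a b c. \<integral>\<omega>. f a \<omega> * g b \<omega> * h c \<omega> \<partial>M"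
  shows "eq_ab P - neq_ab P = (\<integral>\<omega>. bias f \<omega> * bias g \<omega> \<partial>M)"
proof -
  have "eq_ab P - neq_ab P
      = (P 0 0 0 + P 0 0 1) + (P 1 1 0 + P 1 1 1) - (P 0 1 0 + P 0 1 1) - (P 1 0 0 + P 1 0 1)"
    by (simp add: eq_ab_def neq_ab_def)
  also have "\<dots> = (\<integral>\<omega>. (f 0 \<omega> * g 0 \<omega> * h 0 \<omega> + f 0 \<omega> * g 0 \<omega> * h 1 \<omega>)
      + (f 1 \<omega> * g 1 \<omega> * h 0 \<omega> + f 1 \<omega> * g 1 \<omega> * h 1 \<omega>)
      - (f 0 \<omega> * g 1 \<omega> * h 0 \<omega> + f 0 \<omega> * g 1 \<omega> * h 1 \<omega>)
      - (f 1 \<omega> * g 0 \<omega> * h 0 \<omega> + f 1 \<omega> * g 0 \<omega> * h 1 \<omega>) \<partial>M)"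
    using integrable_response_product[OF assms(1-3)] by (simp add: P_def)
  also have "\<dots> = (\<integral>\<omega>. bias f \<omega> * bias g \<omega> * (h 0 \<omega> + h 1 \<omega>) \<partial>M)"
    by (simp add: bias_def algebra_simps)
  also have "\<dots> = (\<integral>\<omega>. bias f \<omega> * bias g \<omega> \<partial>M)"
    using assms(3) by (intro Bochner_Integration.integral_cong) (auto simp: binary_response_def)
  finally show ?thesis .
qed

lemma c1_product_form:
  assumes "binary_response M f" "binary_response M g" "binary_response M h"
  defines "P \<equiv> \<lambda>a b c. \<integral>\<omega>. f a \<omega> * g b \<omega> * h c \<omega> \<partial>M"
  shows "c1 P = (\<integral>\<omega>. h 1 \<omega> \<partial>M)"
proof -
  have "c1 P = P 0 0 1 + P 0 1 1 + P 1 0 1 + P 1 1 1"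
    by (simp add: c1_def)
  also have "\<dots> = (\<integral>\<omega>. f 0 \<omega> * g 0 \<omega> * h 1 \<omega> + f 0 \<omega> * g 1 \<omega> * h 1 \<omega>
      + f 1 \<omega> * g 0 \<omega> * h 1 \<omega> + f 1 \<omega> * g 1 \<omega> * h 1 \<omega> \<partial>M)"
    using integrable_response_product[OF assms(1-3)] by (simp add: P_def)
  also have "\<dots> = (\<integral>\<omega>. (f 0 \<omega> + f 1 \<omega>) * (g 0 \<omega> + g 1 \<omega>) * h 1 \<omega> \<partial>M)"
    by (simp add: algebra_simps)
  also have "\<dots> = (\<integral>\<omega>. h 1 \<omega> \<partial>M)"
    using assms(1,2) by (intro Bochner_Integration.integral_cong) (auto simp: binary_response_def)
  finally show ?thesis .
qed

lemma chsh_expectation_nonneg: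
  assumes f: "binary_response M f" and f': "binary_response M f'"
    and g: "binary_response M g" and g': "binary_response M g'" and h: "binary_response M h"
  shows "0 \<le> (\<integral>\<omega>. bias f' \<omega> * bias g' \<omega> * h 1 \<omega> \<partial>M) + 2 * (\<integral>\<omega>. h 1 \<omega> \<partial>M)
    - (\<integral>\<omega>. bias f \<omega> * bias g \<omega> * h 1 \<omega> \<partial>M) - (\<integral>\<omega>. bias f \<omega> * bias g' \<omega> * h 1 \<omega> \<partial>M)
    - (\<integral>\<omega>. bias f' \<omega> * bias g \<omega> * h 1 \<omega> \<partial>M)" (is "0 \<le> ?S")
proof -
  have h1: "0 \<le> h 1 \<omega>" "h 1 \<omega> \<le> 1" if "\<omega> \<in> space M" for \<omega>
    using binary_response_bounds[OF h _ that] by auto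
  have int: "integrable M (\<lambda>\<omega>. bias p \<omega> * bias q \<omega> * h 1 \<omega>)"
    if "binary_response M p" "binary_response M q" for p q
  proof (rule integrable_abs_le[where K = 1])
    show "(\<lambda>\<omega>. bias p \<omega> * bias q \<omega> * h 1 \<omega>) \<in> borel_measurable M"
      using that h by (intro borel_measurable_times borel_measurable_bias) (auto simp: binary_response_def)
    show "\<bar>bias p \<omega> * bias q \<omega> * h 1 \<omega>\<bar> \<le> 1" if "\<omega> \<in> space M" for \<omega>
      using abs_bias_le_1[OF \<open>binary_response M p\<close> that] abs_bias_le_1[OF \<open>binary_response M q\<close> that]
        h1[OF that]
      by (auto simp: abs_mult intro!: mult_le_one)
  qed
  have "?S = (\<integral>\<omega>. h 1 \<omega> * (2 - (bias f \<omega> * bias g \<omega> + bias f \<omega> * bias g' \<omega>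
      + bias f' \<omega> * bias g \<omega> - bias f' \<omega> * bias g' \<omega>)) \<partial>M)"
    using int[OF f g] int[OF f g'] int[OF f' g] int[OF f' g'] integrable_response[OF h, of 1]
    by (simp add: algebra_simps)
  also have "0 \<le> \<dots>"
    using abs_bias_le_1[OF f] abs_bias_le_1[OF f'] abs_bias_le_1[OF g] abs_bias_le_1[OF g'] h1
    by (intro Bochner_Integration.integral_nonneg mult_nonneg_nonneg) (auto simp: chsh_inequality)
  finally show ?thesis .
qed

end

type_synonym ('a, 'b, 'g) sample_point = "'a \<times> 'b \<times> 'g \<times> 'a \<times> 'b"

definition alice :: "(nat \<Rightarrow> 'b \<Rightarrow> 'g \<Rightarrow> real) \<Rightarrow> nat \<Rightarrow> ('a, 'b, 'g) sample_point \<Rightarrow> real" where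
  "alice pa i = (\<lambda>(x, y, z, x', y'). pa i y z)"

definition alice_split :: "(nat \<Rightarrow> 'b \<Rightarrow> 'g \<Rightarrow> real) \<Rightarrow> nat \<Rightarrow> ('a, 'b, 'g) sample_point \<Rightarrow> real" where
  "alice_split pa i = (\<lambda>(x, y, z, x', y'). pa i y' z)"

definition bob :: "(nat \<Rightarrow> 'a \<Rightarrow> 'g \<Rightarrow> real) \<Rightarrow> nat \<Rightarrow> ('a, 'b, 'g) sample_point \<Rightarrow> real" where
  "bob pb i = (\<lambda>(x, y, z, x', y'). pb i x z)"

definition bob_split :: "(nat \<Rightarrow> 'a \<Rightarrow> 'g \<Rightarrow> real) \<Rightarrow> nat \<Rightarrow> ('a, 'b, 'g) sample_point \<Rightarrow> real" where
  "bob_split pb i = (\<lambda>(x, y, z, x', y'). pb i x' z)"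

definition charlie :: "(nat \<Rightarrow> 'a \<Rightarrow> 'b \<Rightarrow> real) \<Rightarrow> nat \<Rightarrow> ('a, 'b, 'g) sample_point \<Rightarrow> real" where
  "charlie pc i = (\<lambda>(x, y, z, x', y'). pc i x y)"

lemma
  shows Pobs_product_form:
      "Pobs A B G pa pb pc = (\<lambda>i j k. \<integral>\<omega>. alice pa i \<omega> * bob pb j \<omega> * charlie pc k \<omega> \<partial>Omega A B G)"
    and Pint_beta_product_form:
      "Pint_beta A B G pa pb pc = (\<lambda>i j k. \<integral>\<omega>. alice_split pa i \<omega> * bob pb j \<omega> * charlie pc k \<omega> \<partial>Omega A B G)"
    and Pint_alpha_product_form:
      "Pint_alpha A B G pa pb pc = (\<lambda>i j k. \<integral>\<omega>. alice pa i \<omega> * bob_split pb j \<omega> * charlie pc k \<omega> \<partial>Omega A B G)"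
    and Pint_alphabeta_product_form:
      "Pint_alphabeta A B G pa pb pc
         = (\<lambda>i j k. \<integral>\<omega>. alice_split pa i \<omega> * bob_split pb j \<omega> * charlie pc k \<omega> \<partial>Omega A B G)"
  by (simp_all add: fun_eq_iff Pobs_def Pint_beta_def Pint_alpha_def Pint_alphabeta_def
      alice_def alice_split_def bob_def bob_split_def charlie_def split_beta')

lemma binary_response_Omega:
  assumes a: "binary_response (B \<Otimes>\<^sub>M G) (\<lambda>i (y, z). pa i y z)"
    and b: "binary_response (A \<Otimes>\<^sub>M G) (\<lambda>i (x, z). pb i x z)"
    and c: "binary_response (A \<Otimes>\<^sub>M B) (\<lambda>i (x, y). pc i x y)"
  shows "binary_response (Omega A B G) (alice pa)" "binary_response (Omega A B G) (alice_split pa)"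
    "binary_response (Omega A B G) (bob pb)" "binary_response (Omega A B G) (bob_split pb)"
    "binary_response (Omega A B G) (charlie pc)"
proof -
  show "binary_response (Omega A B G) (alice pa)"
    by (rule binary_response_comp[OF a, where X = "\<lambda>(x, y, z, x', y'). (y, z)"])
      (auto simp: Omega_def alice_def split_beta')
  show "binary_response (Omega A B G) (alice_split pa)"
    by (rule binary_response_comp[OF a, where X = "\<lambda>(x, y, z, x', y'). (y', z)"])
      (auto simp: Omega_def alice_split_def split_beta')
  show "binary_response (Omega A B G) (bob pb)"
    by (rule binary_response_comp[OF b, where X = "\<lambda>(x, y, z, x', y'). (x, z)"])
      (auto simp: Omega_def bob_def split_beta')
  show "binary_response (Omega A B G) (bob_split pb)"
    by (rule binary_response_comp[OF b, where X = "\<lambda>(x, y, z, x', y'). (x', z)"])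
      (auto simp: Omega_def bob_split_def split_beta')
  show "binary_response (Omega A B G) (charlie pc)"
    by (rule binary_response_comp[OF c, where X = "\<lambda>(x, y, z, x', y'). (x, y)"])
      (auto simp: Omega_def charlie_def split_beta')
qed

lemma split_correlator_independent_of_charlie:
  assumes "prob_space A" "prob_space B" "prob_space G"
    and a: "binary_response (B \<Otimes>\<^sub>M G) (\<lambda>i (y, z). pa i y z)"
    and b: "binary_response (A \<Otimes>\<^sub>M G) (\<lambda>i (x, z). pb i x z)"
    and c: "binary_response (A \<Otimes>\<^sub>M B) (\<lambda>i (x, y). pc i x y)"
  shows "(\<integral>\<omega>. bias (alice_split pa) \<omega> * bias (bob_split pb) \<omega> \<partial>Omega A B G)
         * (\<integral>\<omega>. charlie pc 1 \<omega> \<partial>Omega A B G)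
       = (\<integral>\<omega>. bias (alice_split pa) \<omega> * bias (bob_split pb) \<omega> * charlie pc 1 \<omega> \<partial>Omega A B G)"
proof -
  let ?R = "G \<Otimes>\<^sub>M (A \<Otimes>\<^sub>M B)"
  interpret AB: prob_space "A \<Otimes>\<^sub>M B"
    using assms(1,2) by (rule prob_space_pair)
  interpret R: prob_space ?R
    using assms(1-3) by (intro prob_space_pair)
  have "binary_response ?R (\<lambda>i (z, x', y'). pa i y' z)"
    by (rule binary_response_comp[OF a, where X = "\<lambda>(z, x', y'). (y', z)"]) (auto simp: split_beta')
  moreover have "binary_response ?R (\<lambda>i (z, x', y'). pb i x' z)"
    by (rule binary_response_comp[OF b, where X = "\<lambda>(z, x', y'). (x', z)"]) (auto simp: split_beta')
  ultimately have "integrable ?R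
      (\<lambda>r. bias (\<lambda>i (z, x', y'). pa i y' z) r * bias (\<lambda>i (z, x', y'). pb i x' z) r)"
    by (rule R.integrable_bias_mult)
  from prob_integral_pair_pair_measure_mult[OF assms(1,2) R.prob_space_axioms
      AB.integrable_response[OF c, of 1] this]
  show ?thesis
    by (simp add: Omega_def bias_def alice_split_def bob_split_def charlie_def split_beta' ac_simps)
qed

theorem mainTheorem2:
  fixes A :: "'a measure" and B :: "'b measure" and G :: "'g measure"
    and pa :: "nat \<Rightarrow> 'b \<Rightarrow> 'g \<Rightarrow> real"
    and pb :: "nat \<Rightarrow> 'a \<Rightarrow> 'g \<Rightarrow> real"
    and pc :: "nat \<Rightarrow> 'a \<Rightarrow> 'b \<Rightarrow> real"
  assumes "prob_space A" and "prob_space B" and "prob_space G"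
    and "\<And>a. a \<in> {0,1} \<Longrightarrow> (\<lambda>(y, z). pa a y z) \<in> borel_measurable (B \<Otimes>\<^sub>M G)"
    and "\<And>b. b \<in> {0,1} \<Longrightarrow> (\<lambda>(x, z). pb b x z) \<in> borel_measurable (A \<Otimes>\<^sub>M G)"
    and "\<And>c. c \<in> {0,1} \<Longrightarrow> (\<lambda>(x, y). pc c x y) \<in> borel_measurable (A \<Otimes>\<^sub>M B)"
    and "\<And>a y z. a \<in> {0,1} \<Longrightarrow> y \<in> space B \<Longrightarrow> z \<in> space G \<Longrightarrow> 0 \<le> pa a y z"
    and "\<And>y z. y \<in> space B \<Longrightarrow> z \<in> space G \<Longrightarrow> pa 0 y z + pa 1 y z = 1"
    and "\<And>b x z. b \<in> {0,1} \<Longrightarrow> x \<in> space A \<Longrightarrow> z \<in> space G \<Longrightarrow> 0 \<le> pb b x z"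
    and "\<And>x z. x \<in> space A \<Longrightarrow> z \<in> space G \<Longrightarrow> pb 0 x z + pb 1 x z = 1"
    and "\<And>c x y. c \<in> {0,1} \<Longrightarrow> x \<in> space A \<Longrightarrow> y \<in> space B \<Longrightarrow> 0 \<le> pc c x y"
    and "\<And>x y. x \<in> space A \<Longrightarrow> y \<in> space B \<Longrightarrow> pc 0 x y + pc 1 x y = 1"
  shows
    "(let Po = Pobs A B G pa pb pc; Pb = Pint_beta A B G pa pb pc;
          Pa = Pint_alpha A B G pa pb pc; Pab = Pint_alphabeta A B G pa pb pc;
          E1obs = eq_c1 Po - neq_c1 Po; E1b = eq_c1 Pb - neq_c1 Pb;
          E1a = eq_c1 Pa - neq_c1 Pa; Eab = eq_ab Pab - neq_ab Pab
      in Eab * c1 Po + 2 * c1 Po - E1obs - E1a - E1b) \<ge> 0"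
proof -
  interpret \<Omega>: prob_space "Omega A B G"
    unfolding Omega_def using assms(1-3) by (intro prob_space_pair)
  have a: "binary_response (B \<Otimes>\<^sub>M G) (\<lambda>i (y, z). pa i y z)"
    using assms(4,7,8) by (rule binary_response_pair_measure)
  have b: "binary_response (A \<Otimes>\<^sub>M G) (\<lambda>i (x, z). pb i x z)"
    using assms(5,9,10) by (rule binary_response_pair_measure)
  have c: "binary_response (A \<Otimes>\<^sub>M B) (\<lambda>i (x, y). pc i x y)"
    using assms(6,11,12) by (rule binary_response_pair_measure)
  note resp = binary_response_Omega[OF a b c]
  show ?thesis
    using \<Omega>.chsh_expectation_nonneg[OF resp]
      split_correlator_independent_of_charlie[OF assms(1-3) a b c]
    by (simp add: Pobs_product_form Pint_beta_product_form Pint_alpha_product_form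
        Pint_alphabeta_product_form \<Omega>.correlator_c1_product_form \<Omega>.correlator_product_form
        \<Omega>.c1_product_form resp)
qed

end
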